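(* Let $\mathcal{G}=(\mathcal{V},\mathcal{E})$ be an undirected graph without self-loops, with symmetric adjacency matrix $A$ having nonnegative entries, where $A_{ij}>0$ if and only if $\{i,j\}\in\mathcal{E}$ (unweighted graphs being the case of $0/1$ entries). Let $\mathcal{V}_1\subseteq\mathcal{V}$ be a nonempty set of nodes, and let $\mathcal{V}_2\subseteq\mathcal{V}\setminus\mathcal{V}_1$ be a nonempty set of nodes such that every node of $\mathcal{V}_2$ is adjacent to at least one node of $\mathcal{V}_1$. Let $A_1$ be the $|\mathcal{V}_1|\times|\mathcal{V}_2|$ submatrix of $A$ with rows indexed by $\mathcal{V}_1$ and columns indexed by $\mathcal{V}_2$, and $A_2$ the $|\mathcal{V}_2|\times|\mathcal{V}_2|$ submatrix of $A$ indexed by $\mathcal{V}_2$. For each $v\in\mathcal{V}_2$ let $s_v>0$ be the sum of row $v$ of the $|\mathcal{V}_2|\times(|\mathcal{V}_1|+|\mathcal{V}_2|)$ matrix $(A_1^T\,|\,A_2)$, and let $\tilde{A}_1$ (of size $|\mathcal{V}_2|\times|\mathcal{V}_1|$) and $\tilde{A}_2$ (of size $|\mathcal{V}_2|\times|\mathcal{V}_2|$) be obtained from $A_1^T$ and $A_2$ respectively by dividing row $v$ by $s_v$ for each $v\in\mathcal{V}_2$. Let $f\ge 1$, let $Z_1$ be any real $|\mathcal{V}_1|\times f$ matrix, and let $Z^*=(I-\tilde{A}_2)^{-1}\tilde{A}_1 Z_1$ (the matrix $I-\tilde{A}_2$ is invertible). For an arbitrary real $|\mathcal{V}_2|\times f$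 matrix $Z^{(0)}$, define $Z^{(t)}=\tilde{A}_1 Z_1+\tilde{A}_2 Z^{(t-1)}$ for $t\ge 1$. Then $\|Z^{(t)}-Z^*\|_F\to 0$ as $t\to+\infty$ exponentially fast, i.e. there exist constants $C\ge 0$ and $\rho\in[0,1)$ such that $\|Z^{(t)}-Z^*\|_F\le C\rho^t$ for all $t\ge 0$, where $\|\cdot\|_F$ denotes the Frobenius norm.
   Context: This is the propagation step used to infer latent vectors (rows of $Z^{(t)}$) for nodes of $\mathcal{V}_2$ from already-computed latent vectors (rows of $Z_1$) for nodes of $\mathcal{V}_1$, by iterating $Z_2 = \tilde{A}_1 Z_1 + \tilde{A}_2 Z_2$; $Z^*$ is the exact solution of this linear system. *)

theory Defs
  imports "Jordan_Normal_Form.Matrix" "Jordan_Normal_Form.Gauss_Jordan_Elimination"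
begin

definition submat_idx :: "real mat \<Rightarrow> nat set \<Rightarrow> nat set \<Rightarrow> real mat" where
  "submat_idx A R C = (let rs = sorted_list_of_set R; cs = sorted_list_of_set C in
     mat (length rs) (length cs) (\<lambda>(i,j). A $$ (rs ! i, cs ! j)))"

definition A1_mat :: "real mat \<Rightarrow> nat set \<Rightarrow> nat set \<Rightarrow> real mat" where
  "A1_mat A V1 V2 = submat_idx A V1 V2"

definition A2_mat :: "real mat \<Rightarrow> nat set \<Rightarrow> real mat" where
  "A2_mat A V2 = submat_idx A V2 V2"

definition row_sum_s :: "real mat \<Rightarrow> nat set \<Rightarrow> nat set \<Rightarrow> nat \<Rightarrow> real" where
  "row_sum_s A V1 V2 i =
     (\<Sum>j<card V1. transpose_mat (A1_mat A V1 V2) $$ (i,j)) + (\<Sum>j<card V2. A2_mat A V2 $$ (i,j))"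

definition A1_tilde :: "real mat \<Rightarrow> nat set \<Rightarrow> nat set \<Rightarrow> real mat" where
  "A1_tilde A V1 V2 = mat (card V2) (card V1)
     (\<lambda>(i,j). transpose_mat (A1_mat A V1 V2) $$ (i,j) / row_sum_s A V1 V2 i)"

definition A2_tilde :: "real mat \<Rightarrow> nat set \<Rightarrow> nat set \<Rightarrow> real mat" where
  "A2_tilde A V1 V2 = mat (card V2) (card V2)
     (\<lambda>(i,j). A2_mat A V2 $$ (i,j) / row_sum_s A V1 V2 i)"

definition frob_norm :: "real mat \<Rightarrow> real" where
  "frob_norm M = sqrt (\<Sum>i<dim_row M. \<Sum>j<dim_col M. (M $$ (i,j))\<^sup>2)"

end

theory Submission
  imports Defs "Jordan_Normal_Form.Determinant"
begin

text \<open>Row \<open>v\<close> of \<open>\<tilde>A\<^sub>2\<close> is row \<open>v\<close> of \<open>A\<^sub>2\<close> divided by a sum that also contains the entries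
  of column \<open>v\<close> of \<open>A\<^sub>1\<close>, one of which is positive. Hence \<open>\<tilde>A\<^sub>2\<close> is nonnegative with all row
  sums at most some \<open>q < 1\<close>, i.e. a \<open>q\<close>-contraction for the largest absolute entry. So
  \<open>I - \<tilde>A\<^sub>2\<close> has trivial kernel, and the error \<open>E\<^sub>t = Z\<^sub>t - Z\<^sup>*\<close> satisfies
  \<open>E\<^sub>t\<^sub>+\<^sub>1 = \<tilde>A\<^sub>2 E\<^sub>t\<close>, so its entries decay like \<open>q\<^sup>t\<close>; the Frobenius norm is at most
  \<open>\<surd>(|V\<^sub>2| f)\<close> times the largest entry.\<close>

definition nonneg_mat :: "real mat \<Rightarrow> bool" where
  "nonneg_mat B \<longleftrightarrow> (\<forall>i<dim_row B. \<forall>j<dim_col B. 0 \<le> B $$ (i,j))"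

definition row_sums_le :: "real mat \<Rightarrow> real \<Rightarrow> bool" where
  "row_sums_le B q \<longleftrightarrow> (\<forall>i<dim_row B. (\<Sum>j<dim_col B. B $$ (i,j)) \<le> q)"

definition abs_entries_le :: "real mat \<Rightarrow> real \<Rightarrow> bool" where
  "abs_entries_le M c \<longleftrightarrow> (\<forall>i<dim_row M. \<forall>j<dim_col M. \<bar>M $$ (i,j)\<bar> \<le> c)"

lemma abs_sum_nonneg_weights_le:
  fixes w x :: "nat \<Rightarrow> real"
  assumes "\<And>j. j < m \<Longrightarrow> 0 \<le> w j" and "(\<Sum>j<m. w j) \<le> q"
    and "\<And>j. j < m \<Longrightarrow> \<bar>x j\<bar> \<le> c" and "0 \<le> c"
  shows "\<bar>\<Sum>j<m. w j * x j\<bar> \<le> q * c"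
proof -
  have "\<bar>\<Sum>j<m. w j * x j\<bar> \<le> (\<Sum>j<m. \<bar>w j * x j\<bar>)" by (rule sum_abs)
  also have "\<dots> \<le> (\<Sum>j<m. w j * c)"
    by (rule sum_mono) (simp add: abs_mult assms(1,3) mult_left_mono)
  also have "\<dots> = (\<Sum>j<m. w j) * c" by (simp add: sum_distrib_right)
  also have "\<dots> \<le> q * c" using assms(2,4) by (rule mult_right_mono)
  finally show ?thesis .
qed

lemma index_mult_mat_sum:
  fixes B D :: "real mat"
  assumes "i < dim_row B" "j < dim_col D" "dim_col B = dim_row D"
  shows "(B * D) $$ (i,j) = (\<Sum>k<dim_col B. B $$ (i,k) * D $$ (k,j))"
  using assms by (simp add: scalar_prod_def atLeast0LessThan)

lemma abs_entries_le_mult: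
  assumes "nonneg_mat B" "row_sums_le B q" "abs_entries_le D c" "0 \<le> c"
    and "dim_col B = dim_row D"
  shows "abs_entries_le (B * D) (q * c)"
  unfolding abs_entries_le_def
proof (intro allI impI)
  fix i j assume "i < dim_row (B * D)" "j < dim_col (B * D)"
  then have "(B * D) $$ (i,j) = (\<Sum>k<dim_col B. B $$ (i,k) * D $$ (k,j))"
    using assms(5) by (intro index_mult_mat_sum) auto
  also have "\<bar>\<dots>\<bar> \<le> q * c"
    using assms \<open>i < dim_row (B * D)\<close> \<open>j < dim_col (B * D)\<close>
    unfolding nonneg_mat_def row_sums_le_def abs_entries_le_def
    by (intro abs_sum_nonneg_weights_le) auto
  finally show "\<bar>(B * D) $$ (i,j)\<bar> \<le> q * c" .
qed

lemma exists_abs_entries_le: "\<exists>c\<ge>0. abs_entries_le M c"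
proof (intro exI conjI)
  show "0 \<le> (\<Sum>i<dim_row M. \<Sum>j<dim_col M. \<bar>M $$ (i,j)\<bar>)" by (intro sum_nonneg) auto
  show "abs_entries_le M (\<Sum>i<dim_row M. \<Sum>j<dim_col M. \<bar>M $$ (i,j)\<bar>)"
    unfolding abs_entries_le_def
  proof (intro allI impI)
    fix i j assume ij: "i < dim_row M" "j < dim_col M"
    have "\<bar>M $$ (i,j)\<bar> \<le> (\<Sum>j'<dim_col M. \<bar>M $$ (i,j')\<bar>)"
      using ij by (intro member_le_sum) auto
    also have "\<dots> \<le> (\<Sum>i'<dim_row M. \<Sum>j'<dim_col M. \<bar>M $$ (i',j')\<bar>)"
      using ij by (intro member_le_sum[where f = "\<lambda>i'. \<Sum>j'<dim_col M. \<bar>M $$ (i',j')\<bar>"] sum_nonneg) auto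
    finally show "\<bar>M $$ (i,j)\<bar> \<le> (\<Sum>i<dim_row M. \<Sum>j<dim_col M. \<bar>M $$ (i,j)\<bar>)" .
  qed
qed

lemma frob_norm_le_if_abs_entries_le:
  assumes "abs_entries_le M c" "0 \<le> c"
  shows "frob_norm M \<le> sqrt (real (dim_row M * dim_col M)) * c"
proof -
  have "frob_norm M \<le> sqrt (\<Sum>i<dim_row M. \<Sum>j<dim_col M. c\<^sup>2)"
    unfolding frob_norm_def
  proof (intro real_sqrt_le_mono sum_mono)
    fix i j assume "i \<in> {..<dim_row M}" "j \<in> {..<dim_col M}"
    then have "\<bar>M $$ (i,j)\<bar> \<le> c" using assms(1) by (auto simp: abs_entries_le_def)
    then show "(M $$ (i,j))\<^sup>2 \<le> c\<^sup>2" by (metis abs_ge_zero order_trans power2_abs power_mono)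
  qed
  also have "\<dots> = sqrt (real (dim_row M * dim_col M)) * c"
    using assms(2) by (simp add: real_sqrt_mult)
  finally show ?thesis .
qed

lemma row_sums_lt_1_imp_le:
  assumes "\<And>i. i < dim_row B \<Longrightarrow> (\<Sum>j<dim_col B. B $$ (i,j)) < 1"
  obtains q where "0 \<le> q" "q < 1" "row_sums_le B q"
proof
  let ?S = "insert 0 ((\<lambda>i. \<Sum>j<dim_col B. B $$ (i,j)) ` {..<dim_row B})"
  show "0 \<le> Max ?S" by simp
  show "row_sums_le B (Max ?S)" unfolding row_sums_le_def by simp
  have "Max ?S \<in> ?S" by (intro Max_in) auto
  then show "Max ?S < 1" using assms by auto
qed

lemma det_one_minus_contraction_neq_0:
  assumes B: "B \<in> carrier_mat m m" and "nonneg_mat B" "row_sums_le B q" "q < 1"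
  shows "det (1\<^sub>m m - B) \<noteq> 0"
proof
  have M: "1\<^sub>m m - B \<in> carrier_mat m m" using B by (intro minus_carrier_mat) auto
  assume "det (1\<^sub>m m - B) = 0"
  then obtain v where v: "v \<in> carrier_vec m" "v \<noteq> 0\<^sub>v m" "(1\<^sub>m m - B) *\<^sub>v v = 0\<^sub>v m"
    using det_0_iff_vec_prod_zero_field[OF M] by blast
  define c where "c = Max (insert 0 ((\<lambda>j. \<bar>v $ j\<bar>) ` {..<m}))"
  have c_ge: "\<bar>v $ j\<bar> \<le> c" if "j < m" for j unfolding c_def using that by simp
  have "c = 0"
  proof (rule ccontr)
    assume "c \<noteq> 0"
    moreover have "c \<in> insert 0 ((\<lambda>j. \<bar>v $ j\<bar>) ` {..<m})" unfolding c_def by (intro Max_in) auto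
    ultimately obtain i where i: "i < m" "c = \<bar>v $ i\<bar>" by auto
    have "v $ i - (\<Sum>j<m. B $$ (i,j) * v $ j) = ((1\<^sub>m m - B) *\<^sub>v v) $ i"
      using v(1) i(1) B
      by (simp add: minus_mult_distrib_mat_vec scalar_prod_def atLeast0LessThan sum_subtractf
          left_diff_distrib if_distrib[of "\<lambda>x. x * _"])
    then have "v $ i = (\<Sum>j<m. B $$ (i,j) * v $ j)" using v(3) i(1) by simp
    then have "c \<le> q * c"
      using i B assms(2,3) c_ge unfolding nonneg_mat_def row_sums_le_def
      by (auto intro!: abs_sum_nonneg_weights_le)
    with \<open>q < 1\<close> \<open>c \<noteq> 0\<close> i(2) show False by (smt (verit) mult_le_cancel_right1)
  qed
  then have "v = 0\<^sub>v m" using c_ge v(1) by (intro eq_vecI) auto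
  with v(2) show False ..
qed

lemma mat_inverse_eq_Some_if_det_neq_0:
  fixes M :: "real mat"
  assumes M: "M \<in> carrier_mat m m" and "det M \<noteq> 0"
  obtains M' where "mat_inverse M = Some M'" "M * M' = 1\<^sub>m m" "M' * M = 1\<^sub>m m" "M' \<in> carrier_mat m m"
proof -
  have "M \<in> Units (ring_mat TYPE(real) m ())" by (rule det_non_zero_imp_unit[OF assms])
  then obtain M' where "mat_inverse M = Some M'"
    using mat_inverse(1)[OF M, of "()"] by (cases "mat_inverse M") auto
  with mat_inverse(2)[OF M this] that show ?thesis by auto
qed

lemma fixed_point_of_inverse:
  fixes B M' C :: "real mat"
  assumes B: "B \<in> carrier_mat m m" and M': "M' \<in> carrier_mat m m" and C: "C \<in> carrier_mat m f"
    and inv: "(1\<^sub>m m - B) * M' = 1\<^sub>m m"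
  shows "M' * C = C + B * (M' * C)"
proof -
  have X: "M' * C \<in> carrier_mat m f" using M' C by simp
  have "M' * C - B * (M' * C) = (1\<^sub>m m - B) * (M' * C)"
    using minus_mult_distrib_mat[of "1\<^sub>m m" m m B "M' * C" f] B X M' C by simp
  also have "\<dots> = ((1\<^sub>m m - B) * M') * C"
    using B M' C by (intro assoc_mult_mat[symmetric]) auto
  also have "\<dots> = C" using inv C by simp
  finally have diff: "M' * C - B * (M' * C) = C" .
  have BX: "B * (M' * C) \<in> carrier_mat m f" using B X by (rule mult_carrier_mat)
  show ?thesis
  proof (rule eq_matI)
    fix i j assume ij: "i < dim_row (C + B * (M' * C))" "j < dim_col (C + B * (M' * C))"
    then have "(M' * C - B * (M' * C)) $$ (i,j) = C $$ (i,j)" by (simp only: diff)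
    then show "(M' * C) $$ (i,j) = (C + B * (M' * C)) $$ (i,j)"
      using ij X BX C by simp
  qed (use B M' C in simp_all)
qed

lemma affine_iteration_error_le:
  fixes B C Zs :: "real mat" and Z :: "nat \<Rightarrow> real mat"
  assumes B: "B \<in> carrier_mat m m" and "nonneg_mat B" "row_sums_le B q" "0 \<le> q"
    and C: "C \<in> carrier_mat m f" and Zs: "Zs \<in> carrier_mat m f" and fixed: "Zs = C + B * Zs"
    and Z0: "Z 0 \<in> carrier_mat m f" and rec: "\<And>t. Z (Suc t) = C + B * Z t"
    and "abs_entries_le (Z 0 - Zs) c" "0 \<le> c"
  shows "abs_entries_le (Z t - Zs) (q ^ t * c)"
proof -
  have Z: "Z t \<in> carrier_mat m f" for t
    by (induction t) (use Z0 B C in \<open>simp_all add: rec\<close>)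
  have err: "Z (Suc t) - Zs = B * (Z t - Zs)" for t
  proof -
    have "Z (Suc t) - Zs = B * Z t - B * Zs"
      by (rule eq_matI) (use B C Z[of t] Zs in \<open>simp_all add: rec arg_cong[OF fixed, of "\<lambda>M. M $$ _"]\<close>)
    also have "\<dots> = B * (Z t - Zs)" using mult_minus_distrib_mat[OF B Z Zs] by simp
    finally show ?thesis .
  qed
  show ?thesis
  proof (induction t)
    case 0
    then show ?case using assms(10) by simp
  next
    case (Suc t)
    have "abs_entries_le (B * (Z t - Zs)) (q * (q ^ t * c))"
      using Suc assms(2,3,4,11) B Zs Z[of t] by (intro abs_entries_le_mult) auto
    then show ?case by (simp add: err mult.assoc)
  qed
qed

lemma sum_nth_sorted_list_of_set:
  assumes "finite V"
  shows "(\<Sum>j<card V. g (sorted_list_of_set V ! j)) = sum g V"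
proof -
  have "(\<Sum>j<card V. g (sorted_list_of_set V ! j)) = sum_list (map g (sorted_list_of_set V))"
    using assms by (simp add: sum_list_sum_nth atLeast0LessThan)
  also have "\<dots> = sum g V"
    using assms by (simp add: sum_list_distinct_conv_sum_set)
  finally show ?thesis .
qed

lemma index_submat_idx:
  assumes "finite R" "finite C" "i < card R" "j < card C"
  shows "submat_idx A R C $$ (i,j) = A $$ (sorted_list_of_set R ! i, sorted_list_of_set C ! j)"
  using assms by (simp add: submat_idx_def)

lemma submat_idx_carrier: "submat_idx A R C \<in> carrier_mat (card R) (card C)"
  by (simp add: submat_idx_def)

lemma row_sum_s_eq:
  assumes "finite V1" "finite V2" "i < card V2"
  defines "v \<equiv> sorted_list_of_set V2 ! i"
  shows "row_sum_s A V1 V2 i = (\<Sum>u\<in>V1. A $$ (u,v)) + (\<Sum>w\<in>V2. A $$ (v,w))"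
proof -
  have "row_sum_s A V1 V2 i
      = (\<Sum>j<card V1. A $$ (sorted_list_of_set V1 ! j, v)) + (\<Sum>j<card V2. A $$ (v, sorted_list_of_set V2 ! j))"
    using assms unfolding row_sum_s_def A1_mat_def A2_mat_def
    using submat_idx_carrier[of A V1 V2]
    by (intro arg_cong2[where f = "(+)"] sum.cong) (simp_all add: index_submat_idx)
  then show ?thesis
    using assms(1,2) by (simp add: sum_nth_sorted_list_of_set[where g = "\<lambda>u. A $$ (u,v)"]
        sum_nth_sorted_list_of_set[where g = "\<lambda>w. A $$ (v,w)"])
qed

lemma A2_tilde_carrier: "A2_tilde A V1 V2 \<in> carrier_mat (card V2) (card V2)"
  by (simp add: A2_tilde_def)

lemma A1_tilde_carrier: "A1_tilde A V1 V2 \<in> carrier_mat (card V2) (card V1)"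
  by (simp add: A1_tilde_def)

context
  fixes n :: nat and A :: "real mat" and V1 V2 :: "nat set"
  assumes A_nonneg: "\<And>i j. i < n \<Longrightarrow> j < n \<Longrightarrow> 0 \<le> A $$ (i,j)"
    and V1_sub: "V1 \<subseteq> {0..<n}" and V2_sub: "V2 \<subseteq> {0..<n}"
    and V2_adj: "\<forall>v\<in>V2. \<exists>u\<in>V1. A $$ (u,v) > 0"
begin

lemma finite_V1: "finite V1"
  using V1_sub finite_subset by blast

lemma finite_V2: "finite V2"
  using V2_sub finite_subset by blast

lemma A2_row_sum_lt_row_sum_s:
  assumes "i < card V2"
  defines "v \<equiv> sorted_list_of_set V2 ! i"
  shows "0 \<le> (\<Sum>w\<in>V2. A $$ (v,w))" "(\<Sum>w\<in>V2. A $$ (v,w)) < row_sum_s A V1 V2 i"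
proof -
  have v: "v \<in> V2" using assms finite_V2 nth_mem[of i "sorted_list_of_set V2"] by simp
  then obtain u where u: "u \<in> V1" "A $$ (u,v) > 0" using V2_adj by blast
  have "A $$ (u,v) \<le> (\<Sum>u\<in>V1. A $$ (u,v))"
    using u v V1_sub V2_sub finite_V1 by (intro member_le_sum A_nonneg) auto
  with u have "0 < (\<Sum>u\<in>V1. A $$ (u,v))" by linarith
  moreover show "0 \<le> (\<Sum>w\<in>V2. A $$ (v,w))"
    using v V2_sub by (intro sum_nonneg A_nonneg) auto
  ultimately show "(\<Sum>w\<in>V2. A $$ (v,w)) < row_sum_s A V1 V2 i"
    using row_sum_s_eq[OF finite_V1 finite_V2 assms(1)] by (simp add: v_def)
qed

lemma A2_tilde_nonneg: "nonneg_mat (A2_tilde A V1 V2)"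
  unfolding nonneg_mat_def
proof (intro allI impI)
  fix i j assume ij: "i < dim_row (A2_tilde A V1 V2)" "j < dim_col (A2_tilde A V1 V2)"
  then have "i < card V2" "j < card V2" by (simp_all add: A2_tilde_def)
  then show "0 \<le> A2_tilde A V1 V2 $$ (i,j)"
    using A2_row_sum_lt_row_sum_s[of i] V2_sub finite_V2
      nth_mem[of i "sorted_list_of_set V2"] nth_mem[of j "sorted_list_of_set V2"]
    by (auto simp: A2_tilde_def A2_mat_def index_submat_idx intro!: divide_nonneg_pos A_nonneg)
qed

lemma A2_tilde_row_sum_lt_1:
  assumes "i < card V2"
  shows "(\<Sum>j<card V2. A2_tilde A V1 V2 $$ (i,j)) < 1"
proof -
  define v where "v = sorted_list_of_set V2 ! i"
  have "(\<Sum>j<card V2. A2_tilde A V1 V2 $$ (i,j))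
      = (\<Sum>j<card V2. A $$ (v, sorted_list_of_set V2 ! j)) / row_sum_s A V1 V2 i"
    using assms finite_V2
    by (simp add: A2_tilde_def A2_mat_def index_submat_idx sum_divide_distrib v_def)
  also have "\<dots> = (\<Sum>w\<in>V2. A $$ (v,w)) / row_sum_s A V1 V2 i"
    using finite_V2 by (simp add: sum_nth_sorted_list_of_set[where g = "\<lambda>w. A $$ (v,w)"])
  also have "\<dots> < 1"
    using A2_row_sum_lt_row_sum_s[OF assms] by (simp add: v_def)
  finally show ?thesis .
qed

end

theorem theorem1:
  fixes n f :: nat and A :: "real mat" and V1 V2 :: "nat set"
    and Z1 :: "real mat" and Z :: "nat \<Rightarrow> real mat"
  assumes A_dim: "A \<in> carrier_mat n n"
    and A_sym: "\<And>i j. i < n \<Longrightarrow> j < n \<Longrightarrow> A $$ (i,j) = A $$ (j,i)"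
    and A_nonneg: "\<And>i j. i < n \<Longrightarrow> j < n \<Longrightarrow> A $$ (i,j) \<ge> 0"
    and no_loops: "\<And>i. i < n \<Longrightarrow> A $$ (i,i) = 0"
    and V1_sub: "V1 \<subseteq> {0..<n}" and V1_ne: "V1 \<noteq> {}"
    and V2_sub: "V2 \<subseteq> {0..<n} - V1" and V2_ne: "V2 \<noteq> {}"
    and V2_adj: "\<forall>v\<in>V2. \<exists>u\<in>V1. A $$ (u,v) > 0"
    and f_pos: "f \<ge> 1"
    and Z1_dim: "Z1 \<in> carrier_mat (card V1) f"
    and Z0_dim: "Z 0 \<in> carrier_mat (card V2) f"
    and Z_rec: "\<And>t. Z (Suc t) = A1_tilde A V1 V2 * Z1 + A2_tilde A V1 V2 * Z t"
  shows "invertible_mat (1\<^sub>m (card V2) - A2_tilde A V1 V2) \<and>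
    (let Zstar = the (mat_inverse (1\<^sub>m (card V2) - A2_tilde A V1 V2)) * A1_tilde A V1 V2 * Z1
     in \<exists>C \<rho>. C \<ge> 0 \<and> 0 \<le> \<rho> \<and> \<rho> < 1 \<and>
          (\<forall>t. frob_norm (Z t - Zstar) \<le> C * \<rho> ^ t))"
proof -
  let ?m = "card V2" and ?B = "A2_tilde A V1 V2" and ?C = "A1_tilde A V1 V2 * Z1"
  have V2_sub': "V2 \<subseteq> {0..<n}" using V2_sub by blast
  note B = A2_tilde_carrier[of A V1 V2]
  have C: "?C \<in> carrier_mat ?m f" using A1_tilde_carrier Z1_dim by (rule mult_carrier_mat)
  obtain q where q: "0 \<le> q" "q < 1" "row_sums_le ?B q"
    using A2_tilde_row_sum_lt_1[OF A_nonneg V1_sub V2_sub' V2_adj] B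
    by (metis carrier_matD row_sums_lt_1_imp_le)
  have nonneg: "nonneg_mat ?B" using A2_tilde_nonneg[OF A_nonneg V1_sub V2_sub' V2_adj] .
  have M: "1\<^sub>m ?m - ?B \<in> carrier_mat ?m ?m" using B by (intro minus_carrier_mat) auto
  obtain M' where M': "mat_inverse (1\<^sub>m ?m - ?B) = Some M'" "(1\<^sub>m ?m - ?B) * M' = 1\<^sub>m ?m"
      "M' * (1\<^sub>m ?m - ?B) = 1\<^sub>m ?m" "M' \<in> carrier_mat ?m ?m"
    using mat_inverse_eq_Some_if_det_neq_0[OF M det_one_minus_contraction_neq_0[OF B nonneg q(3,2)]] .
  have "invertible_mat (1\<^sub>m ?m - ?B)"
    using B M' unfolding invertible_mat_def inverts_mat_def by auto
  moreover define Zs where "Zs = M' * ?C"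
  have Zstar: "the (mat_inverse (1\<^sub>m ?m - ?B)) * A1_tilde A V1 V2 * Z1 = Zs"
    using M'(1) assoc_mult_mat[OF M'(4) A1_tilde_carrier Z1_dim] by (simp add: Zs_def)
  have Zs: "Zs \<in> carrier_mat ?m f" using M'(4) C by (simp add: Zs_def)
  have fixed: "Zs = ?C + ?B * Zs"
    unfolding Zs_def by (rule fixed_point_of_inverse[OF B M'(4) C M'(2)])
  obtain c where c: "0 \<le> c" "abs_entries_le (Z 0 - Zs) c" using exists_abs_entries_le by blast
  have "frob_norm (Z t - Zs) \<le> (sqrt (real (?m * f)) * c) * q ^ t" for t
  proof -
    have "abs_entries_le (Z t - Zs) (q ^ t * c)"
      by (rule affine_iteration_error_le[OF B nonneg q(3,1) C Zs fixed Z0_dim Z_rec c(2,1)])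
    then have "frob_norm (Z t - Zs) \<le> sqrt (real (?m * f)) * (q ^ t * c)"
      using frob_norm_le_if_abs_entries_le[of "Z t - Zs"] c q Zs by simp
    then show ?thesis by (simp add: mult_ac)
  qed
  then have "\<exists>C \<rho>. C \<ge> 0 \<and> 0 \<le> \<rho> \<and> \<rho> < 1 \<and> (\<forall>t. frob_norm (Z t - Zs) \<le> C * \<rho> ^ t)"
    using c q by (intro exI[of _ "sqrt (real (?m * f)) * c"] exI[of _ q]) auto
  ultimately show ?thesis unfolding Let_def Zstar by blast
qed

end
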